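(* Suppose $p=2$, $\rho>0$ and $\mathbb{P}_\circ\in\mathscr{Q}_2$. Then for any $\mu\in\mathscr{M}_2(\mathbb{P}_\circ,\rho)$ and $X\in\mathcal{O}^{d,r}$, $$\psi(\mu,X)=\Big(\big(\mathrm{tr}((I_d-XX^\top)\Sigma_\circ)\big)^{1/2}+\big(\rho^2-\|\mu-\mathbb{E}_{\mathbb{P}_\circ}[\xi_\circ]\|_2^2\big)^{1/2}\Big)^2+\mathrm{tr}\big((I_d-XX^\top)\mu\mu^\top\big).$$
   Context: Let $d,r$ be integers with $1\le r<d$ and $\mathcal{O}^{d,r}=\{X\in\mathbb{R}^{d\times r}: X^\top X=I_r\}$. $\mathscr{Q}_2$ is the set of Borel probability distributions on $\mathbb{R}^d$ with finite second moment, and $\mathbb{W}_2(\mathbb{P}_1,\mathbb{P}_2)=\inf_{\mathbb{Q}\in\mathscr{J}(\mathbb{P}_1,\mathbb{P}_2)}\big(\mathbb{E}_{(\xi_1,\xi_2)\sim\mathbb{Q}}\|\xi_1-\xi_2\|_2^2\big)^{1/2}$, with $\mathscr{J}(\mathbb{P}_1,\mathbb{P}_2)$ the set of couplings of $\mathbb{P}_1,\mathbb{P}_2$. For $X\in\mathcal{O}^{d,r}$ let $\omega_X(\xi)=\mathrm{tr}((I_d-XX^\top)\xi\xi^\top)$. Let $\mathscr{M}_2(\mathbb{P}_\circ,\rho)=\{\mathbb{E}_{\mathbb{P}}[\xi]:\mathbb{P}\in\mathscr{Q}_2,\ \mathbb{W}_2(\mathbb{P},\mathbb{P}_\circ)\le\rho\}$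 and, for $\mu$ in this set, $\psi(\mu,X)=\sup\{\mathbb{E}_{\mathbb{P}}[\omega_X(\xi)]:\mathbb{P}\in\mathscr{Q}_2,\ \mathbb{W}_2(\mathbb{P},\mathbb{P}_\circ)\le\rho,\ \mathbb{E}_{\mathbb{P}}[\xi]=\mu\}$. $\Sigma_\circ=\mathbb{E}_{\mathbb{P}_\circ}[(\xi-\mathbb{E}_{\mathbb{P}_\circ}[\xi])(\xi-\mathbb{E}_{\mathbb{P}_\circ}[\xi])^\top]$ is the covariance matrix under $\mathbb{P}_\circ$. *)

theory Defs
  imports "HOL-Probability.Probability"
begin

definition Q2 :: "(real^'d) measure set" where
  "Q2 = {P. prob_space P \<and> sets P = sets borel \<and> integrable P (\<lambda>x. (norm x)^2)}"

definition couplings :: "(real^'d) measure \<Rightarrow> (real^'d) measure \<Rightarrow> ((real^'d) \<times> (real^'d)) measure set" where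
  "couplings P1 P2 = {Q. prob_space Q \<and> sets Q = sets borel \<and>
       distr Q borel fst = P1 \<and> distr Q borel snd = P2}"

definition W2 :: "(real^'d) measure \<Rightarrow> (real^'d) measure \<Rightarrow> real" where
  "W2 P1 P2 = sqrt (Inf ((\<lambda>Q. \<integral>z. (norm (fst z - snd z))^2 \<partial>Q) ` couplings P1 P2))"

definition mean :: "(real^'d) measure \<Rightarrow> real^'d" where
  "mean P = (\<integral>x. x \<partial>P)"

definition outer :: "real^'d \<Rightarrow> real^'d \<Rightarrow> real^'d^'d" where
  "outer u v = (\<chi> i j. u$i * v$j)"

definition covariance :: "(real^'d) measure \<Rightarrow> real^'d^'d" where
  "covariance P = (\<chi> i j. \<integral>x. (x$i - mean P $ i) * (x$j - mean P $ j) \<partial>P)"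

definition stiefel :: "(real^'r^'d) set" where
  "stiefel = {X. transpose X ** X = mat 1}"

definition omega :: "real^'r^'d \<Rightarrow> real^'d \<Rightarrow> real" where
  "omega X \<xi> = trace ((mat 1 - X ** transpose X) ** outer \<xi> \<xi>)"

definition M2 :: "(real^'d) measure \<Rightarrow> real \<Rightarrow> (real^'d) set" where
  "M2 P0 \<rho> = {mean P | P. P \<in> Q2 \<and> W2 P P0 \<le> \<rho>}"

definition psi :: "(real^'d) measure \<Rightarrow> real \<Rightarrow> real^'d \<Rightarrow> real^'r^'d \<Rightarrow> ereal" where
  "psi P0 \<rho> \<mu> X = (SUP P \<in> {P. P \<in> Q2 \<and> W2 P P0 \<le> \<rho> \<and> mean P = \<mu>}.
      ereal (\<integral>\<xi>. omega X \<xi> \<partial>P))"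

end

theory Submission
  imports Defs
begin

(* Write Pi = I - X X^T, the orthogonal projection onto the complement of the columns of X, so
   that omega_X(v) = |Pi v|^2, and c = tr(Pi Sigma0).  Take any coupling (xi, xi0) of P and P0
   with cost t = E|xi - xi0|^2.  Then E|Pi xi|^2 = |Pi mu|^2 + E|Pi(xi - mu)|^2, and writing
   xi - mu = (xi0 - m0) + (D - E D) with D = xi - xi0, Minkowski's inequality bounds the last term
   by (sqrt c + sqrt(t - |mu - m0|^2))^2; letting t decrease to W2(P, P0)^2 <= rho^2 gives the
   upper bound.  It is attained by xi = xi0 + (mu - m0) + delta w with
   delta = sqrt(rho^2 - |mu - m0|^2) and w the normalised Pi(xi0 - m0), which makes Minkowski's
   inequality an equality; when c = 0 the latter vanishes, and w is instead a unit vector in the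
   range of Pi times an independent random sign. *)

section \<open>The projection onto the orthogonal complement of a Stiefel frame\<close>

definition proj_perp :: "real^'r^'d \<Rightarrow> real^'d^'d" where
  "proj_perp X = mat 1 - X ** transpose X"

lemma proj_perp_apply: "proj_perp X *v v = v - X *v (transpose X *v v)"
  unfolding proj_perp_def
  by (simp add: matrix_vector_mult_diff_rdistrib flip: matrix_vector_mul_assoc del: transpose_matrix_vector)

lemma trace_mult_outer: "trace (A ** outer u u) = u \<bullet> (A *v u)"
  by (simp add: trace_def outer_def matrix_matrix_mult_def matrix_vector_mult_def inner_vec_def
      sum_distrib_left mult_ac)

context
  fixes X :: "real^'r^'d"
  assumes orthonormal: "transpose X ** X = mat 1"
begin

lemma proj_perp_idem: "proj_perp X *v (proj_perp X *v v) = proj_perp X *v v"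
proof -
  have "transpose X *v (X *v w) = w" for w
    by (simp add: matrix_vector_mul_assoc orthonormal del: transpose_matrix_vector)
  then show ?thesis
    by (simp add: proj_perp_apply matrix_vector_mult_diff_distrib del: transpose_matrix_vector)
qed

lemma proj_perp_symmetric: "(proj_perp X *v u) \<bullet> v = u \<bullet> (proj_perp X *v v)"
proof -
  have "(X *v (transpose X *v u)) \<bullet> v = u \<bullet> (X *v (transpose X *v v))"
    by (metis dot_lmul_matrix inner_commute transpose_matrix_vector)
  then show ?thesis
    by (simp add: proj_perp_apply inner_diff_left inner_diff_right del: transpose_matrix_vector)
qed

lemma inner_proj_perp_self: "u \<bullet> (proj_perp X *v u) = (norm (proj_perp X *v u))^2"
  by (metis proj_perp_idem proj_perp_symmetric power2_norm_eq_inner)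

lemma omega_eq_norm_proj_perp: "omega X u = (norm (proj_perp X *v u))^2"
  using inner_proj_perp_self[of u] unfolding omega_def trace_mult_outer by (simp add: proj_perp_def)

lemma norm_proj_perp_le: "norm (proj_perp X *v u) \<le> norm u"
proof -
  let ?p = "proj_perp X *v u"
  have "orthogonal ?p (u - ?p)"
    by (simp add: orthogonal_def inner_diff_right proj_perp_symmetric proj_perp_idem)
  then have "(norm u)^2 = (norm ?p)^2 + (norm (u - ?p))^2"
    using norm_add_Pythagorean[of ?p "u - ?p"] by simp
  then show ?thesis
    by (metis add.commute le_add_same_cancel2 norm_ge_zero power2_le_imp_le zero_le_power2)
qed

lemma proj_perp_fixes_unit_vector:
  assumes "CARD('r) < CARD('d)"
  obtains v where "norm v = 1" and "proj_perp X *v v = v"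
proof -
  let ?P = "proj_perp X"
  have "trace ?P = real CARD('d) - real CARD('r)"
    by (simp add: proj_perp_def trace_sub trace_I trace_mul_sym[of X] orthonormal)
  then have "?P \<noteq> 0" using assms by (auto simp: trace_def)
  then obtain u where u: "?P *v u \<noteq> 0"
    by (metis matrix_vector_mult_0 matrix_eq)
  show ?thesis
  proof
    show "norm ((1 / norm (?P *v u)) *\<^sub>R (?P *v u)) = 1" using u by simp
    show "?P *v ((1 / norm (?P *v u)) *\<^sub>R (?P *v u)) = (1 / norm (?P *v u)) *\<^sub>R (?P *v u)"
      by (simp add: matrix_vector_mult_scaleR proj_perp_idem)
  qed
qed

end

section \<open>Square integrable random vectors\<close>

definition square_integrable :: "'a measure \<Rightarrow> ('a \<Rightarrow> real^'d) \<Rightarrow> bool" where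
  "square_integrable M f \<longleftrightarrow> f \<in> borel_measurable M \<and> integrable M (\<lambda>z. (norm (f z))^2)"

lemma square_integrableD:
  "square_integrable M f \<Longrightarrow> f \<in> borel_measurable M"
  "square_integrable M f \<Longrightarrow> integrable M (\<lambda>z. (norm (f z))^2)"
  by (simp_all add: square_integrable_def)

lemma discriminant_le_of_quadratic_nonneg:
  fixes A B C :: real
  assumes "\<And>t. 0 \<le> A - 2 * t * C + t^2 * B" and "B \<ge> 0"
  shows "C^2 \<le> A * B"
proof (cases "B = 0")
  case True
  then have "C = 0"
    using assms(1)[of "(A + 1) / (2 * C)"] assms(1)[of "- (A + 1) / (2 * C)"]
    by (cases "C = 0") (auto simp: field_simps)
  then show ?thesis using True by simp
next
  case False
  then have "B > 0" using assms by simp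
  have "0 \<le> A - 2 * (C / B) * C + (C / B)^2 * B" by (rule assms(1))
  then have "0 \<le> (A - 2 * (C / B) * C + (C / B)^2 * B) * B" using \<open>B > 0\<close> by simp
  also have "\<dots> = A * B - C^2" using \<open>B > 0\<close> by (simp add: field_simps power2_eq_square)
  finally show ?thesis by simp
qed

context prob_space
begin

lemma square_integrable_imp_integrable:
  assumes "square_integrable M f"
  shows "integrable M f"
proof (rule Bochner_Integration.integrable_bound[where f="\<lambda>z. 1 + (norm (f z))^2"])
  show "integrable M (\<lambda>z. 1 + (norm (f z))^2)" "f \<in> borel_measurable M"
    using assms by (simp_all add: square_integrable_def)
  have "norm (f x) \<le> 1 + (norm (f x))^2" for x
  proof -
    have "2 * norm (f x) \<le> (norm (f x))^2 + 1" using sum_squares_bound[of "norm (f x)" 1] by simp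
    then show ?thesis using norm_ge_zero[of "f x"] by linarith
  qed
  then show "AE x in M. norm (f x) \<le> norm (1 + (norm (f x))\<^sup>2)" by simp
qed

lemma square_integrable_inner:
  assumes f: "square_integrable M f" and g: "square_integrable M g"
  shows "integrable M (\<lambda>z. f z \<bullet> g z)"
proof (rule Bochner_Integration.integrable_bound[where f="\<lambda>z. (norm (f z))^2 + (norm (g z))^2"])
  have [measurable]: "f \<in> borel_measurable M" "g \<in> borel_measurable M"
    using f g by (simp_all add: square_integrable_def)
  show "integrable M (\<lambda>z. (norm (f z))^2 + (norm (g z))^2)"
    using f g by (simp add: square_integrable_def)
  show "(\<lambda>z. f z \<bullet> g z) \<in> borel_measurable M" by measurable
  have "\<bar>f x \<bullet> g x\<bar> \<le> (norm (f x))^2 + (norm (g x))^2" for x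
    using Cauchy_Schwarz_ineq2[of "f x" "g x"] sum_squares_bound[of "norm (f x)" "norm (g x)"]
      mult_nonneg_nonneg[OF norm_ge_zero[of "f x"] norm_ge_zero[of "g x"]] by linarith
  then show "AE x in M. norm (f x \<bullet> g x) \<le> norm ((norm (f x))^2 + (norm (g x))^2)" by simp
qed

lemma square_integrable_const: "square_integrable M (\<lambda>z. c)"
  by (simp add: square_integrable_def)

lemma square_integrable_add:
  assumes f: "square_integrable M f" and g: "square_integrable M g"
  shows "square_integrable M (\<lambda>z. f z + g z)"
proof -
  have [measurable]: "f \<in> borel_measurable M" "g \<in> borel_measurable M"
    using f g by (simp_all add: square_integrable_def)
  have "integrable M (\<lambda>z. (norm (f z + g z))^2)"
  proof (rule Bochner_Integration.integrable_bound[where f="\<lambda>z. 2 * (norm (f z))^2 + 2 * (norm (g z))^2"])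
    show "integrable M (\<lambda>z. 2 * (norm (f z))^2 + 2 * (norm (g z))^2)"
      using f g by (simp add: square_integrable_def)
    show "(\<lambda>z. (norm (f z + g z))^2) \<in> borel_measurable M" by measurable
    have "(norm (f x + g x))^2 \<le> 2 * (norm (f x))^2 + 2 * (norm (g x))^2" for x
    proof -
      have "(norm (f x + g x))^2 \<le> (norm (f x) + norm (g x))^2"
        by (simp add: power_mono norm_triangle_ineq)
      also have "\<dots> \<le> 2 * (norm (f x))^2 + 2 * (norm (g x))^2"
        using sum_squares_bound[of "norm (f x)" "norm (g x)"] by (simp add: power2_sum)
      finally show ?thesis .
    qed
    then show "AE x in M. norm ((norm (f x + g x))^2) \<le> norm (2 * (norm (f x))^2 + 2 * (norm (g x))^2)"
      by simp
  qed
  then show ?thesis by (simp add: square_integrable_def)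
qed

lemma square_integrable_bounded_linear:
  assumes T: "bounded_linear T" and f: "square_integrable M f"
  shows "square_integrable M (\<lambda>z. T (f z) :: real^'e)"
proof -
  obtain K where K: "\<And>x. norm (T x) \<le> norm x * K"
    using bounded_linear.pos_bounded[OF T] by blast
  have meas: "(\<lambda>z. T (f z)) \<in> borel_measurable M"
    using borel_measurable_continuous_on[OF linear_continuous_on[OF T] square_integrableD(1)[OF f]] .
  have "integrable M (\<lambda>z. (norm (T (f z)))^2)"
  proof (rule Bochner_Integration.integrable_bound[where f="\<lambda>z. K^2 * (norm (f z))^2"])
    show "integrable M (\<lambda>z. K^2 * (norm (f z))^2)" using f by (simp add: square_integrable_def)
    show "(\<lambda>z. (norm (T (f z)))^2) \<in> borel_measurable M" using meas by simp
    have "(norm (T (f x)))^2 \<le> K^2 * (norm (f x))^2" for x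
      using power_mono[OF K[of "f x"] norm_ge_zero] by (simp add: power_mult_distrib mult_ac)
    then show "AE x in M. norm ((norm (T (f x)))^2) \<le> norm (K^2 * (norm (f x))^2)" by simp
  qed
  then show ?thesis using meas by (simp add: square_integrable_def)
qed

lemma square_integrable_scaleR: "square_integrable M f \<Longrightarrow> square_integrable M (\<lambda>z. c *\<^sub>R f z)"
  using square_integrable_bounded_linear[OF bounded_linear_scaleR_right] by blast

lemma square_integrable_diff:
  "square_integrable M f \<Longrightarrow> square_integrable M g \<Longrightarrow> square_integrable M (\<lambda>z. f z - g z)"
  using square_integrable_add[of f "\<lambda>z. (-1) *\<^sub>R g z"] square_integrable_scaleR[of g "-1"] by simp

lemma square_integrable_matrix_vector_mult:
  "square_integrable M f \<Longrightarrow> square_integrable M (\<lambda>z. (A :: real^'d^'e) *v f z)"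
  using square_integrable_bounded_linear[OF matrix_vector_mul_bounded_linear] by blast

lemma integral_norm_sq_eq_mean_plus_variance:
  assumes f: "square_integrable M f"
  shows "(\<integral>z. (norm (f z))^2 \<partial>M) =
    (norm (\<integral>z. f z \<partial>M))^2 + (\<integral>z. (norm (f z - (\<integral>z. f z \<partial>M)))^2 \<partial>M)"
proof -
  define m where "m = (\<integral>z. f z \<partial>M)"
  have fi: "integrable M f" using square_integrable_imp_integrable[OF f] .
  have "(norm (f z - m))^2 = (norm (f z))^2 - 2 * (f z \<bullet> m) + (norm m)^2" for z
    by (simp add: power2_norm_eq_inner inner_diff_left inner_diff_right inner_commute)
  then have "(\<integral>z. (norm (f z - m))^2 \<partial>M) = (\<integral>z. (norm (f z))^2 \<partial>M) - 2 * (m \<bullet> m) + (norm m)^2"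
    using f fi by (simp add: square_integrable_def prob_space m_def)
  then show ?thesis by (simp add: m_def power2_norm_eq_inner)
qed

lemma integral_inner_le:
  assumes f: "square_integrable M f" and g: "square_integrable M g"
  shows "(\<integral>z. f z \<bullet> g z \<partial>M) \<le> sqrt (\<integral>z. (norm (f z))^2 \<partial>M) * sqrt (\<integral>z. (norm (g z))^2 \<partial>M)"
proof -
  define A where "A = (\<integral>z. (norm (f z))^2 \<partial>M)"
  define B where "B = (\<integral>z. (norm (g z))^2 \<partial>M)"
  define C where "C = (\<integral>z. f z \<bullet> g z \<partial>M)"
  have "0 \<le> A - 2 * t * C + t^2 * B" for t
  proof -
    have "(norm (f z - t *\<^sub>R g z))^2 = (norm (f z))^2 - 2 * t * (f z \<bullet> g z) + t^2 * (norm (g z))^2" for z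
      unfolding power2_norm_eq_inner by (simp add: inner_commute power2_eq_square algebra_simps)
    then have "(\<integral>z. (norm (f z - t *\<^sub>R g z))^2 \<partial>M) = A - 2 * t * C + t^2 * B"
      unfolding A_def B_def C_def using f g square_integrable_inner[OF f g]
      by (simp add: square_integrable_def)
    moreover have "0 \<le> (\<integral>z. (norm (f z - t *\<^sub>R g z))^2 \<partial>M)" by (rule integral_nonneg_AE) simp
    ultimately show ?thesis by simp
  qed
  moreover have "B \<ge> 0" unfolding B_def by (rule integral_nonneg_AE) simp
  ultimately have "C^2 \<le> A * B" by (rule discriminant_le_of_quadratic_nonneg)
  then show ?thesis by (simp add: A_def B_def C_def real_le_rsqrt flip: real_sqrt_mult)
qed

lemma integral_norm_add_sq_le:
  assumes f: "square_integrable M f" and g: "square_integrable M g"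
  shows "(\<integral>z. (norm (f z + g z))^2 \<partial>M) \<le>
    (sqrt (\<integral>z. (norm (f z))^2 \<partial>M) + sqrt (\<integral>z. (norm (g z))^2 \<partial>M))^2"
proof -
  define A where "A = (\<integral>z. (norm (f z))^2 \<partial>M)"
  define B where "B = (\<integral>z. (norm (g z))^2 \<partial>M)"
  have "A \<ge> 0" "B \<ge> 0" unfolding A_def B_def by (rule integral_nonneg_AE, simp)+
  have "(norm (f z + g z))^2 = (norm (f z))^2 + 2 * (f z \<bullet> g z) + (norm (g z))^2" for z
    by (simp add: power2_norm_eq_inner inner_add_left inner_add_right inner_commute)
  then have "(\<integral>z. (norm (f z + g z))^2 \<partial>M) = A + 2 * (\<integral>z. f z \<bullet> g z \<partial>M) + B"
    unfolding A_def B_def using f g square_integrable_inner[OF f g]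
    by (simp add: square_integrable_def)
  also have "\<dots> \<le> A + 2 * (sqrt A * sqrt B) + B"
    using integral_inner_le[OF f g] by (simp add: A_def B_def)
  also have "\<dots> = (sqrt A + sqrt B)^2"
    using \<open>A \<ge> 0\<close> \<open>B \<ge> 0\<close> by (simp add: power2_sum)
  finally show ?thesis by (simp add: A_def B_def)
qed

lemma norm_integral_diff_sq_le:
  assumes "square_integrable M \<xi>" and "square_integrable M x"
  shows "(norm ((\<integral>z. \<xi> z \<partial>M) - (\<integral>z. x z \<partial>M)))^2 \<le> (\<integral>z. (norm (\<xi> z - x z))^2 \<partial>M)"
proof -
  have "(\<integral>z. \<xi> z - x z \<partial>M) = (\<integral>z. \<xi> z \<partial>M) - (\<integral>z. x z \<partial>M)"
    using assms by (simp add: square_integrable_imp_integrable)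
  moreover have "0 \<le> (\<integral>z. (norm (\<xi> z - x z - (\<integral>z. \<xi> z - x z \<partial>M)))^2 \<partial>M)"
    by (rule integral_nonneg_AE) simp
  ultimately show ?thesis
    using integral_norm_sq_eq_mean_plus_variance[OF square_integrable_diff[OF assms]] by simp
qed

text \<open>A \<xi> - A(E \<xi>) splits into the centred A x and the centred A(\<xi> - x), whose second
  moments are combined by Minkowski's inequality.\<close>

lemma integral_norm_sq_contraction_le:
  fixes A :: "real^'d^'d"
  assumes contraction: "\<And>v. norm (A *v v) \<le> norm v"
    and \<xi>: "square_integrable M \<xi>" and x: "square_integrable M x"
  defines "\<mu> \<equiv> \<integral>z. \<xi> z \<partial>M" and "m \<equiv> \<integral>z. x z \<partial>M"
  shows "(\<integral>z. (norm (A *v \<xi> z))^2 \<partial>M) \<le> (norm (A *v \<mu>))^2 +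
    (sqrt (\<integral>z. (norm (A *v (x z - m)))^2 \<partial>M)
     + sqrt ((\<integral>z. (norm (\<xi> z - x z))^2 \<partial>M) - (norm (\<mu> - m))^2))^2"
proof -
  define a where "a = \<mu> - m"
  have D: "square_integrable M (\<lambda>z. \<xi> z - x z)" using square_integrable_diff[OF \<xi> x] .
  have "(\<integral>z. \<xi> z - x z \<partial>M) = a"
    using \<xi> x by (simp add: square_integrable_imp_integrable a_def \<mu>_def m_def)
  then have var_D: "(\<integral>z. (norm (\<xi> z - x z - a))^2 \<partial>M) = (\<integral>z. (norm (\<xi> z - x z))^2 \<partial>M) - (norm a)^2"
    using integral_norm_sq_eq_mean_plus_variance[OF D] by simp
  have "(\<integral>z. A *v \<xi> z \<partial>M) = A *v \<mu>"
    unfolding \<mu>_def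
    by (rule integral_bounded_linear[OF matrix_vector_mul_bounded_linear square_integrable_imp_integrable[OF \<xi>]])
  then have split_mean: "(\<integral>z. (norm (A *v \<xi> z))^2 \<partial>M) = (norm (A *v \<mu>))^2 + (\<integral>z. (norm (A *v \<xi> z - A *v \<mu>))^2 \<partial>M)"
    using integral_norm_sq_eq_mean_plus_variance[OF square_integrable_matrix_vector_mult[OF \<xi>, where A=A]] by simp
  have "A *v \<xi> z - A *v \<mu> = A *v (x z - m) + A *v (\<xi> z - x z - a)" for z
    by (simp add: a_def flip: matrix_vector_right_distrib matrix_vector_mult_diff_distrib)
  then have "(\<integral>z. (norm (A *v \<xi> z - A *v \<mu>))^2 \<partial>M)
      \<le> (sqrt (\<integral>z. (norm (A *v (x z - m)))^2 \<partial>M) + sqrt (\<integral>z. (norm (A *v (\<xi> z - x z - a)))^2 \<partial>M))^2"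
    using integral_norm_add_sq_le[OF square_integrable_matrix_vector_mult square_integrable_matrix_vector_mult,
        OF square_integrable_diff[OF x square_integrable_const] square_integrable_diff[OF D square_integrable_const]]
    by simp
  also have "\<dots> \<le> (sqrt (\<integral>z. (norm (A *v (x z - m)))^2 \<partial>M) + sqrt (\<integral>z. (norm (\<xi> z - x z - a))^2 \<partial>M))^2"
  proof -
    have "(\<integral>z. (norm (A *v (\<xi> z - x z - a)))^2 \<partial>M) \<le> (\<integral>z. (norm (\<xi> z - x z - a))^2 \<partial>M)"
      using square_integrableD(2)[OF square_integrable_matrix_vector_mult[OF square_integrable_diff[OF D square_integrable_const]]]
        square_integrableD(2)[OF square_integrable_diff[OF D square_integrable_const]]
      by (intro integral_mono) (auto intro!: power_mono contraction)
    then show ?thesis by (intro power_mono add_left_mono real_sqrt_le_mono) auto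
  qed
  finally show ?thesis using split_mean var_D by (simp add: a_def)
qed

end

definition aligned_direction :: "'a measure \<Rightarrow> real^'d^'d \<Rightarrow> ('a \<Rightarrow> real^'d) \<Rightarrow> ('a \<Rightarrow> real^'d) \<Rightarrow> bool"
  where "aligned_direction M A x w \<longleftrightarrow>
    square_integrable M w \<and> (\<integral>z. w z \<partial>M) = 0 \<and> (\<integral>z. (norm (w z))^2 \<partial>M) = 1 \<and> (\<forall>z. A *v w z = w z) \<and>
    (\<integral>z. (A *v (x z - (\<integral>z. x z \<partial>M))) \<bullet> w z \<partial>M) = sqrt (\<integral>z. (norm (A *v (x z - (\<integral>z. x z \<partial>M))))^2 \<partial>M)"

context prob_space
begin

lemma integral_aligned_perturbation:
  assumes x: "square_integrable M x" and w: "aligned_direction M A x w"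
  shows "(\<integral>z. x z + a + \<delta> *\<^sub>R w z \<partial>M) = (\<integral>z. x z \<partial>M) + a"
    and "(\<integral>z. (norm ((x z + a + \<delta> *\<^sub>R w z) - x z))^2 \<partial>M) = (norm a)^2 + \<delta>^2"
proof -
  have iw: "integrable M w" and ix: "integrable M x"
    using w x by (simp_all add: aligned_direction_def square_integrable_imp_integrable)
  then show "(\<integral>z. x z + a + \<delta> *\<^sub>R w z \<partial>M) = (\<integral>z. x z \<partial>M) + a"
    using w by (simp add: aligned_direction_def prob_space)
  have "(norm ((x z + a + \<delta> *\<^sub>R w z) - x z))^2 = (norm a)^2 + 2 * \<delta> * (w z \<bullet> a) + \<delta>^2 * (norm (w z))^2" for z
    unfolding power2_norm_eq_inner by (simp add: inner_commute power2_eq_square algebra_simps)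
  then show "(\<integral>z. (norm ((x z + a + \<delta> *\<^sub>R w z) - x z))^2 \<partial>M) = (norm a)^2 + \<delta>^2"
    using iw w by (simp add: aligned_direction_def square_integrable_def prob_space)
qed

text \<open>The equality case of integral_norm_sq_contraction_le.\<close>

lemma integral_norm_sq_aligned_perturbation:
  fixes A :: "real^'d^'d"
  assumes x: "square_integrable M x" and w: "aligned_direction M A x w"
  shows "(\<integral>z. (norm (A *v (x z + a + \<delta> *\<^sub>R w z)))^2 \<partial>M) =
         (norm (A *v ((\<integral>z. x z \<partial>M) + a)))^2 +
         (sqrt (\<integral>z. (norm (A *v (x z - (\<integral>z. x z \<partial>M))))^2 \<partial>M) + \<delta>)^2"
proof -
  define m where "m = (\<integral>z. x z \<partial>M)"
  define c where "c = sqrt (\<integral>z. (norm (A *v (x z - m)))^2 \<partial>M)"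
  define \<xi> where "\<xi> z = x z + a + \<delta> *\<^sub>R w z" for z
  have w_sq: "square_integrable M w" using w by (simp add: aligned_direction_def)
  have \<xi>: "square_integrable M \<xi>"
    unfolding \<xi>_def
    using square_integrable_add[OF square_integrable_add[OF x square_integrable_const] square_integrable_scaleR[OF w_sq]] .
  have "(\<integral>z. \<xi> z \<partial>M) = m + a"
    using integral_aligned_perturbation(1)[OF x w] by (simp add: \<xi>_def m_def)
  then have "(\<integral>z. A *v \<xi> z \<partial>M) = A *v (m + a)"
    using integral_bounded_linear[OF matrix_vector_mul_bounded_linear[of A] square_integrable_imp_integrable[OF \<xi>]]
    by simp
  moreover have "A *v \<xi> z - A *v (m + a) = A *v (x z - m) + \<delta> *\<^sub>R w z" for z
  proof -
    have "A *v \<xi> z - A *v (m + a) = A *v (x z - m) + \<delta> *\<^sub>R (A *v w z)"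
      unfolding \<xi>_def
      by (simp add: algebra_simps flip: matrix_vector_mult_diff_distrib matrix_vector_right_distrib
          matrix_vector_mult_scaleR)
    then show ?thesis using w by (simp add: aligned_direction_def)
  qed
  ultimately have split_mean: "(\<integral>z. (norm (A *v \<xi> z))^2 \<partial>M)
      = (norm (A *v (m + a)))^2 + (\<integral>z. (norm (A *v (x z - m) + \<delta> *\<^sub>R w z))^2 \<partial>M)"
    using integral_norm_sq_eq_mean_plus_variance[OF square_integrable_matrix_vector_mult[OF \<xi>, where A=A]]
    by simp
  have "(norm (A *v (x z - m) + \<delta> *\<^sub>R w z))^2
      = (norm (A *v (x z - m)))^2 + 2 * \<delta> * ((A *v (x z - m)) \<bullet> w z) + \<delta>^2 * (norm (w z))^2" for z
    unfolding power2_norm_eq_inner by (simp add: inner_commute power2_eq_square algebra_simps)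
  moreover have Ax: "square_integrable M (\<lambda>z. A *v (x z - m))"
    using square_integrable_matrix_vector_mult[OF square_integrable_diff[OF x square_integrable_const]] .
  moreover have "c^2 = (\<integral>z. (norm (A *v (x z - m)))^2 \<partial>M)"
    unfolding c_def by (rule real_sqrt_pow2) (rule integral_nonneg_AE, simp)
  ultimately have "(\<integral>z. (norm (A *v (x z - m) + \<delta> *\<^sub>R w z))^2 \<partial>M) = c^2 + 2 * \<delta> * c + \<delta>^2"
    using square_integrableD(2)[OF Ax] square_integrable_inner[OF Ax w_sq] square_integrableD(2)[OF w_sq] w
    by (simp add: aligned_direction_def m_def c_def)
  then show ?thesis
    using split_mean by (simp add: \<xi>_def m_def c_def power2_sum)
qed

lemma aligned_direction_normalised:
  fixes A :: "real^'d^'d"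
  assumes x: "square_integrable M x" and idem: "\<And>u. A *v (A *v u) = A *v u"
  defines "m \<equiv> \<integral>z. x z \<partial>M"
  defines "c \<equiv> \<integral>z. (norm (A *v (x z - m)))^2 \<partial>M"
  assumes "c > 0"
  shows "aligned_direction M A x (\<lambda>z. (1 / sqrt c) *\<^sub>R (A *v (x z - m)))"
proof -
  define w where "w z = (1 / sqrt c) *\<^sub>R (A *v (x z - m))" for z
  have "square_integrable M w"
    unfolding w_def using square_integrable_scaleR[OF square_integrable_matrix_vector_mult[OF
          square_integrable_diff[OF x square_integrable_const]]] .
  moreover have "(\<integral>z. w z \<partial>M) = 0"
  proof -
    have "(\<integral>z. A *v (x z - m) \<partial>M) = A *v (\<integral>z. x z - m \<partial>M)"
      using integral_bounded_linear[OF matrix_vector_mul_bounded_linear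
          square_integrable_imp_integrable[OF square_integrable_diff[OF x square_integrable_const]]] .
    also have "(\<integral>z. x z - m \<partial>M) = 0"
      using square_integrable_imp_integrable[OF x] by (simp add: prob_space m_def)
    finally show ?thesis unfolding w_def by simp
  qed
  moreover have "(\<integral>z. (norm (w z))^2 \<partial>M) = 1"
    unfolding w_def using \<open>c > 0\<close> by (simp add: power_mult_distrib power_divide c_def)
  moreover have "A *v w z = w z" for z unfolding w_def by (simp add: matrix_vector_mult_scaleR idem)
  moreover have "(\<integral>z. (A *v (x z - m)) \<bullet> w z \<partial>M) = sqrt c"
  proof -
    have "(\<integral>z. (A *v (x z - m)) \<bullet> w z \<partial>M) = (1 / sqrt c) * c"
      unfolding w_def by (simp add: power2_norm_eq_inner c_def)
    also have "\<dots> = sqrt c" using \<open>c > 0\<close> by (simp add: field_simps real_sqrt_pow2[symmetric] power2_eq_square)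
    finally show ?thesis .
  qed
  ultimately show ?thesis unfolding aligned_direction_def w_def m_def c_def by blast
qed

text \<open>If the centred A x vanishes almost surely, every direction fixed by A is aligned except
  for the requirement of zero mean, which forces it to be random.\<close>

lemma aligned_direction_random_sign:
  fixes A :: "real^'d^'d"
  assumes x: "square_integrable M x"
    and v: "norm v = 1" "A *v v = v"
    and s: "s \<in> borel_measurable M" "\<And>z. \<bar>s z\<bar> = 1" "(\<integral>z. s z \<partial>M) = 0"
    and c: "(\<integral>z. (norm (A *v (x z - (\<integral>z. x z \<partial>M))))^2 \<partial>M) = 0"
  shows "aligned_direction M A x (\<lambda>z. s z *\<^sub>R v)"
proof -
  define m where "m = (\<integral>z. x z \<partial>M)"
  define w where "w z = s z *\<^sub>R v" for z
  have Ax: "square_integrable M (\<lambda>z. A *v (x z - m))"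
    using square_integrable_matrix_vector_mult[OF square_integrable_diff[OF x square_integrable_const]] .
  have norm_w: "(norm (w z))^2 = 1" for z by (simp add: w_def v s(2))
  have [measurable]: "s \<in> borel_measurable M" by (rule s(1))
  have "w \<in> borel_measurable M" unfolding w_def by measurable
  then have w: "square_integrable M w"
    using norm_w by (simp add: square_integrable_def)
  moreover have "integrable M s"
    using s by (intro integrable_const_bound[where B=1]) auto
  then have "(\<integral>z. w z \<partial>M) = 0" unfolding w_def using s(3) by simp
  moreover have "(\<integral>z. (norm (w z))^2 \<partial>M) = 1" using norm_w by (simp add: prob_space)
  moreover have "A *v w z = w z" for z unfolding w_def by (simp add: matrix_vector_mult_scaleR v)
  moreover have "(\<integral>z. (A *v (x z - m)) \<bullet> w z \<partial>M) = 0"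
  proof -
    have "(\<integral>z. (A *v (x z - m)) \<bullet> w z \<partial>M) \<le> 0"
      using integral_inner_le[OF Ax w] c by (simp add: m_def)
    moreover have "(\<integral>z. (- (A *v (x z - m))) \<bullet> w z \<partial>M) \<le> 0"
      using integral_inner_le[OF square_integrable_scaleR[OF Ax, of "-1"] w] c by (simp add: m_def)
    ultimately show ?thesis by simp
  qed
  ultimately show ?thesis using c unfolding aligned_direction_def w_def m_def by simp
qed

lemma exists_aligned_direction:
  fixes A :: "real^'d^'d" and s :: "'a \<Rightarrow> real"
  assumes "square_integrable M x" and "\<And>u. A *v (A *v u) = A *v u"
    and "norm v = 1" "A *v v = v"
    and "s \<in> borel_measurable M" "\<And>z. \<bar>s z\<bar> = 1" "(\<integral>z. s z \<partial>M) = 0"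
  obtains w where "aligned_direction M A x w"
proof (cases "(\<integral>z. (norm (A *v (x z - (\<integral>z. x z \<partial>M))))^2 \<partial>M) > 0")
  case True
  then show ?thesis using aligned_direction_normalised[OF assms(1,2)] that by blast
next
  case False
  have "0 \<le> (\<integral>z. (norm (A *v (x z - (\<integral>z. x z \<partial>M))))^2 \<partial>M)"
    by (rule integral_nonneg_AE) simp
  with False have "(\<integral>z. (norm (A *v (x z - (\<integral>z. x z \<partial>M))))^2 \<partial>M) = 0" by linarith
  then show ?thesis using aligned_direction_random_sign[OF assms(1,3-7)] that by blast
qed

end

section \<open>Distributions with finite second moment and their couplings\<close>

lemma borel_measurable_vec_nth [measurable]: "(\<lambda>x::real^'d. x $ i) \<in> borel_measurable borel"
  by (rule borel_measurable_continuous_onI[OF linear_continuous_on[OF bounded_linear_vec_nth]])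

lemma borel_measurable_matrix_vector_mult [measurable]:
  "(\<lambda>x. (A :: real^'d^'e) *v x) \<in> borel_measurable borel"
  by (rule borel_measurable_continuous_onI[OF linear_continuous_on[OF matrix_vector_mul_bounded_linear]])

lemma Q2D:
  assumes "P \<in> Q2"
  shows "prob_space P" "sets P = sets borel" "space P = UNIV" "square_integrable P (\<lambda>x. x)"
proof -
  show "prob_space P" "sets P = sets borel" using assms by (auto simp: Q2_def)
  then show "space P = UNIV" by (metis sets_eq_imp_space_eq space_borel)
  show "square_integrable P (\<lambda>x. x)" using assms \<open>sets P = sets borel\<close>
    by (auto simp: Q2_def square_integrable_def measurable_cong_sets[OF \<open>sets P = sets borel\<close> refl])
qed

lemma (in prob_space) distr_in_Q2:
  assumes "square_integrable M \<xi>"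
  shows "distr M borel \<xi> \<in> Q2"
proof -
  have "integrable (distr M borel \<xi>) (\<lambda>x. (norm x)^2)"
    using integrable_distr_eq[OF square_integrableD(1)[OF assms], of "\<lambda>x. (norm x)^2"]
      square_integrableD(2)[OF assms] by simp
  then show ?thesis
    unfolding Q2_def using prob_space_distr[OF square_integrableD(1)[OF assms]] by simp
qed

lemma (in prob_space) mean_distr:
  "\<xi> \<in> borel_measurable M \<Longrightarrow> mean (distr M borel \<xi>) = (\<integral>z. \<xi> z \<partial>M)"
  unfolding mean_def by (simp add: integral_distr)

lemma trace_mult_covariance:
  fixes A :: "real^'d^'d"
  assumes P: "P \<in> Q2"
  shows "trace (A ** covariance P) = (\<integral>x. (x - mean P) \<bullet> (A *v (x - mean P)) \<partial>P)"
proof -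
  define m where "m = mean P"
  interpret prob_space P using Q2D[OF P] by simp
  have sP: "sets P = sets borel" using Q2D[OF P] by simp
  have centred: "square_integrable P (\<lambda>x. x - m)"
    using square_integrable_diff[OF Q2D(4)[OF P] square_integrable_const] .
  have int: "integrable P (\<lambda>x. (x$k - m$k) * (x$i - m$i))" for k i
  proof (rule Bochner_Integration.integrable_bound[where f="\<lambda>x. (norm (x - m))^2"])
    show "integrable P (\<lambda>x. (norm (x - m))^2)" using square_integrableD(2)[OF centred] .
    show "(\<lambda>x. (x$k - m$k) * (x$i - m$i)) \<in> borel_measurable P"
      unfolding measurable_cong_sets[OF sP refl] by measurable
    have "\<bar>(x - m)$k\<bar> * \<bar>(x - m)$i\<bar> \<le> norm (x - m) * norm (x - m)" for x
      by (intro mult_mono component_le_norm_cart) auto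
    then show "AE x in P. norm ((x$k - m$k) * (x$i - m$i)) \<le> norm ((norm (x - m))^2)"
      by (simp add: abs_mult power2_eq_square)
  qed
  have "(\<integral>x. (x - m) \<bullet> (A *v (x - m)) \<partial>P)
      = (\<integral>x. (\<Sum>i\<in>UNIV. \<Sum>k\<in>UNIV. A$i$k * ((x$k - m$k) * (x$i - m$i))) \<partial>P)"
    by (simp add: inner_vec_def matrix_vector_mult_def sum_distrib_left mult_ac)
  also have "\<dots> = (\<Sum>i\<in>UNIV. \<Sum>k\<in>UNIV. A$i$k * (\<integral>x. (x$k - m$k) * (x$i - m$i) \<partial>P))"
    using int by (simp add: integral_sum)
  also have "\<dots> = trace (A ** covariance P)"
    by (simp add: trace_def matrix_matrix_mult_def covariance_def m_def)
  finally show ?thesis by (simp add: m_def)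
qed

lemma trace_proj_perp_covariance:
  assumes "transpose X ** X = mat 1" and "P \<in> Q2"
  shows "trace (proj_perp X ** covariance P) = (\<integral>x. (norm (proj_perp X *v (x - mean P)))^2 \<partial>P)"
  using trace_mult_covariance[OF assms(2)] by (simp add: inner_proj_perp_self[OF assms(1)])

lemma distr_pair_snd:
  assumes N: "prob_space N" and M: "sigma_finite_measure M"
  shows "distr (N \<Otimes>\<^sub>M M) M snd = M"
proof (intro measure_eqI)
  fix A assume A: "A \<in> sets (distr (N \<Otimes>\<^sub>M M) M snd)"
  then have A': "A \<in> sets M" by simp
  have "snd -` A \<inter> space (N \<Otimes>\<^sub>M M) = space N \<times> A"
    using sets.sets_into_space[OF A'] by (auto simp: space_pair_measure)
  then have "emeasure (distr (N \<Otimes>\<^sub>M M) M snd) A = emeasure (N \<Otimes>\<^sub>M M) (space N \<times> A)"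
    using A' by (simp add: emeasure_distr)
  also have "\<dots> = emeasure M A"
    using sigma_finite_measure.emeasure_pair_measure_Times[OF M, of "space N" N A] A'
      prob_space.emeasure_space_1[OF N] by simp
  finally show "emeasure (distr (N \<Otimes>\<^sub>M M) M snd) A = emeasure M A" .
qed simp

lemma couplingD:
  fixes P1 P2 :: "(real^'d) measure"
  assumes Q: "Q \<in> couplings P1 P2" and P1: "P1 \<in> Q2" and P2: "P2 \<in> Q2"
  shows "prob_space Q"
    and "\<And>g :: real^'d \<Rightarrow> real. g \<in> borel_measurable borel \<Longrightarrow> integral\<^sup>L P1 g = (\<integral>z. g (fst z) \<partial>Q)"
    and "\<And>g :: real^'d \<Rightarrow> real. g \<in> borel_measurable borel \<Longrightarrow> integral\<^sup>L P2 g = (\<integral>z. g (snd z) \<partial>Q)"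
    and "mean P1 = (\<integral>z. fst z \<partial>Q)" "mean P2 = (\<integral>z. snd z \<partial>Q)"
    and "square_integrable Q fst" "square_integrable Q snd"
proof -
  have sQ: "sets Q = sets (borel \<Otimes>\<^sub>M borel)"
    using Q unfolding borel_prod by (simp add: couplings_def)
  show "prob_space Q" using Q by (simp add: couplings_def)
  have mf: "fst \<in> measurable Q borel" and ms: "snd \<in> measurable Q borel"
    unfolding measurable_cong_sets[OF sQ refl] by simp_all
  have d1: "distr Q borel fst = P1" and d2: "distr Q borel snd = P2"
    using Q unfolding couplings_def by blast+
  show "integral\<^sup>L P1 g = (\<integral>z. g (fst z) \<partial>Q)" if "g \<in> borel_measurable borel" for g :: "real^'d \<Rightarrow> real"
    using integral_distr[OF mf that] unfolding d1 .
  show "integral\<^sup>L P2 g = (\<integral>z. g (snd z) \<partial>Q)" if "g \<in> borel_measurable borel" for g :: "real^'d \<Rightarrow> real"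
    using integral_distr[OF ms that] unfolding d2 .
  show "mean P1 = (\<integral>z. fst z \<partial>Q)" "mean P2 = (\<integral>z. snd z \<partial>Q)"
    unfolding mean_def using integral_distr[OF mf, of "\<lambda>x. x"] integral_distr[OF ms, of "\<lambda>x. x"] d1 d2
    by simp_all
  have "integrable Q (\<lambda>z. (norm (fst z))^2)" "integrable Q (\<lambda>z. (norm (snd z))^2)"
    using P1 P2 integrable_distr_eq[OF mf, of "\<lambda>x. (norm x)^2"] integrable_distr_eq[OF ms, of "\<lambda>x. (norm x)^2"] d1 d2
    by (simp_all add: Q2_def)
  then show "square_integrable Q fst" "square_integrable Q snd"
    using mf ms by (simp_all add: square_integrable_def)
qed

lemma couplings_nonempty:
  fixes P1 P2 :: "(real^'d) measure"
  assumes P1: "P1 \<in> Q2" and P2: "P2 \<in> Q2"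
  shows "couplings P1 P2 \<noteq> {}"
proof -
  interpret p1: prob_space P1 using Q2D[OF P1] by simp
  interpret p2: prob_space P2 using Q2D[OF P2] by simp
  interpret pp: pair_prob_space P1 P2 by unfold_locales
  have s1: "sets P1 = sets borel" and s2: "sets P2 = sets borel" using Q2D P1 P2 by auto
  have "sets (P1 \<Otimes>\<^sub>M P2) = sets (borel \<Otimes>\<^sub>M borel)"
    using s1 s2 by (intro sets_pair_measure_cong)
  then have "sets (P1 \<Otimes>\<^sub>M P2) = sets borel" by (metis borel_prod)
  moreover have "distr (P1 \<Otimes>\<^sub>M P2) borel fst = P1"
  proof -
    have "distr (P1 \<Otimes>\<^sub>M P2) borel fst = distr (P1 \<Otimes>\<^sub>M P2) P1 fst"
      using s1 by (intro distr_cong) auto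
    then show ?thesis using p2.distr_pair_fst by simp
  qed
  moreover have "distr (P1 \<Otimes>\<^sub>M P2) borel snd = P2"
  proof -
    have "distr (P1 \<Otimes>\<^sub>M P2) borel snd = distr (P1 \<Otimes>\<^sub>M P2) P2 snd"
      using s2 by (intro distr_cong) auto
    then show ?thesis
      using distr_pair_snd[OF p1.prob_space_axioms p2.sigma_finite_measure_axioms] by simp
  qed
  ultimately have "P1 \<Otimes>\<^sub>M P2 \<in> couplings P1 P2"
    unfolding couplings_def using pp.prob_space_axioms by simp
  then show ?thesis by blast
qed

definition transport_costs :: "(real^'d) measure \<Rightarrow> (real^'d) measure \<Rightarrow> real set" where
  "transport_costs P1 P2 = (\<lambda>Q. \<integral>z. (norm (fst z - snd z))^2 \<partial>Q) ` couplings P1 P2"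

lemma transport_costs_nonneg: "t \<in> transport_costs P1 P2 \<Longrightarrow> 0 \<le> t"
  unfolding transport_costs_def by (auto intro!: integral_nonneg_AE)

lemma Inf_transport_costs_le:
  assumes "W2 P1 P2 \<le> \<rho>" and "0 \<le> \<rho>"
  shows "Inf (transport_costs P1 P2) \<le> \<rho>^2"
proof (cases "Inf (transport_costs P1 P2) \<le> 0")
  case False
  then have "(sqrt (Inf (transport_costs P1 P2)))^2 \<le> \<rho>^2"
    using assms by (intro power_mono) (auto simp: W2_def transport_costs_def)
  then show ?thesis using False by simp
qed (use assms in \<open>simp add: order_trans\<close>)

lemma W2_le_coupling_cost:
  assumes "Q \<in> couplings P1 P2"
  shows "W2 P1 P2 \<le> sqrt (\<integral>z. (norm (fst z - snd z))^2 \<partial>Q)"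
proof -
  have "bdd_below (transport_costs P1 P2)"
    by (auto simp: bdd_below_def intro: transport_costs_nonneg)
  moreover have "(\<integral>z. (norm (fst z - snd z))^2 \<partial>Q) \<in> transport_costs P1 P2"
    using assms by (simp add: transport_costs_def)
  ultimately show ?thesis
    unfolding W2_def transport_costs_def[symmetric] by (intro real_sqrt_le_mono cInf_lower)
qed

lemma (in prob_space) W2_distr_le:
  assumes \<xi>: "\<xi> \<in> borel_measurable M" and x: "x \<in> borel_measurable M" and P0: "distr M borel x = P0"
  shows "W2 (distr M borel \<xi>) P0 \<le> sqrt (\<integral>z. (norm (\<xi> z - x z))^2 \<partial>M)"
proof -
  define Q where "Q = distr M borel (\<lambda>z. (\<xi> z, x z))"
  have pair: "(\<lambda>z. (\<xi> z, x z)) \<in> measurable M borel"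
    using measurable_Pair[OF \<xi> x] unfolding borel_prod .
  have fst: "fst \<in> measurable (borel :: ((real^'d) \<times> (real^'d)) measure) borel"
    and snd: "snd \<in> measurable (borel :: ((real^'d) \<times> (real^'d)) measure) borel"
    using measurable_fst[of "borel :: (real^'d) measure" "borel :: (real^'d) measure"]
      measurable_snd[of "borel :: (real^'d) measure" "borel :: (real^'d) measure"]
    unfolding borel_prod by blast+
  have coupling: "Q \<in> couplings (distr M borel \<xi>) P0"
    unfolding couplings_def Q_def
    using prob_space_distr[OF pair] distr_distr[OF fst pair] distr_distr[OF snd pair] P0
    by (simp add: comp_def)
  have cost: "(\<integral>z. (norm (fst z - snd z))^2 \<partial>Q) = (\<integral>z. (norm (\<xi> z - x z))^2 \<partial>M)"
  proof -
    have "(\<lambda>p. (norm (fst p - snd p))^2) \<in> borel_measurable (borel :: ((real^'d) \<times> (real^'d)) measure)"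
      by (intro borel_measurable_continuous_onI continuous_intros)
    from integral_distr[OF pair this] show ?thesis unfolding Q_def by simp
  qed
  show ?thesis using W2_le_coupling_cost[OF coupling] cost by simp
qed

section \<open>The worst-case value of the projection residual\<close>

lemma omega_le_of_coupling:
  fixes P P0 :: "(real^'d) measure" and X :: "real^'r^'d"
  assumes XX: "transpose X ** X = mat 1" and P: "P \<in> Q2" and P0: "P0 \<in> Q2"
    and Q: "Q \<in> couplings P P0"
  defines "c \<equiv> \<integral>x. (norm (proj_perp X *v (x - mean P0)))^2 \<partial>P0"
    and "t \<equiv> \<integral>z. (norm (fst z - snd z))^2 \<partial>Q"
  shows "(norm (mean P - mean P0))^2 \<le> t"
    and "(\<integral>\<xi>. omega X \<xi> \<partial>P) \<le> (norm (proj_perp X *v mean P))^2 +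
           (sqrt c + sqrt (t - (norm (mean P - mean P0))^2))^2"
proof -
  interpret prob_space Q using couplingD(1)[OF Q P P0] .
  note marginals = couplingD[OF Q P P0]
  show "(norm (mean P - mean P0))^2 \<le> t"
    using norm_integral_diff_sq_le[OF marginals(6,7)] marginals(4,5) by (simp add: t_def)
  have "c = (\<integral>z. (norm (proj_perp X *v (snd z - mean P0)))^2 \<partial>Q)"
    using marginals(3)[of "\<lambda>x. (norm (proj_perp X *v (x - mean P0)))^2"] by (simp add: c_def)
  moreover have "(\<integral>\<xi>. omega X \<xi> \<partial>P) = (\<integral>z. (norm (proj_perp X *v fst z))^2 \<partial>Q)"
    using marginals(2)[of "\<lambda>x. (norm (proj_perp X *v x))^2"] by (simp add: omega_eq_norm_proj_perp[OF XX])
  ultimately show "(\<integral>\<xi>. omega X \<xi> \<partial>P) \<le> (norm (proj_perp X *v mean P))^2 +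
           (sqrt c + sqrt (t - (norm (mean P - mean P0))^2))^2"
    using integral_norm_sq_contraction_le[OF norm_proj_perp_le[OF XX] marginals(6,7)] marginals(4,5)
    by (simp add: t_def)
qed

text \<open>The bound of omega_le_of_coupling is monotone and continuous in the transport cost, so it
  passes to the infimum of the costs, which lies in their closure.\<close>

lemma omega_upper_bound:
  fixes P P0 :: "(real^'d) measure" and X :: "real^'r^'d"
  assumes XX: "transpose X ** X = mat 1" and P: "P \<in> Q2" and P0: "P0 \<in> Q2"
    and W: "W2 P P0 \<le> \<rho>" and \<rho>: "\<rho> \<ge> 0"
  defines "c \<equiv> \<integral>x. (norm (proj_perp X *v (x - mean P0)))^2 \<partial>P0"
  shows "(norm (mean P - mean P0))^2 \<le> \<rho>^2"
    and "(\<integral>\<xi>. omega X \<xi> \<partial>P) \<le> (norm (proj_perp X *v mean P))^2 +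
           (sqrt c + sqrt (\<rho>^2 - (norm (mean P - mean P0))^2))^2"
proof -
  define S where "S = transport_costs P P0"
  define a where "a = (norm (mean P - mean P0))^2"
  define f where "f t = (norm (proj_perp X *v mean P))^2 + (sqrt c + sqrt (t - a))^2" for t
  have "c \<ge> 0" unfolding c_def by (rule integral_nonneg_AE) simp
  have S_ne: "S \<noteq> {}" using couplings_nonempty[OF P P0] by (simp add: S_def transport_costs_def)
  have S_bdd: "bdd_below S" by (auto simp: S_def bdd_below_def intro: transport_costs_nonneg)
  have S_bounds: "a \<le> t \<and> (\<integral>\<xi>. omega X \<xi> \<partial>P) \<le> f t" if "t \<in> S" for t
    using that omega_le_of_coupling[OF XX P P0] by (auto simp: S_def transport_costs_def a_def f_def c_def)
  have a_le: "a \<le> Inf S" using S_ne S_bounds by (intro cInf_greatest) auto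
  have Inf_le: "Inf S \<le> \<rho>^2" unfolding S_def using Inf_transport_costs_le[OF W \<rho>] .
  show "(norm (mean P - mean P0))^2 \<le> \<rho>^2" using a_le Inf_le by (simp add: a_def)
  have "closed {t. (\<integral>\<xi>. omega X \<xi> \<partial>P) \<le> f t}"
    unfolding f_def by (intro closed_Collect_le continuous_intros)
  then have "closure S \<subseteq> {t. (\<integral>\<xi>. omega X \<xi> \<partial>P) \<le> f t}"
    using S_bounds by (intro closure_minimal) auto
  then have "(\<integral>\<xi>. omega X \<xi> \<partial>P) \<le> f (Inf S)"
    using closure_contains_Inf[OF S_ne S_bdd] by blast
  also have "f (Inf S) \<le> f (\<rho>^2)"
    unfolding f_def using a_le Inf_le \<open>c \<ge> 0\<close> by (intro add_left_mono power_mono add_left_mono real_sqrt_le_mono) auto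
  finally show "(\<integral>\<xi>. omega X \<xi> \<partial>P) \<le> (norm (proj_perp X *v mean P))^2 +
           (sqrt c + sqrt (\<rho>^2 - (norm (mean P - mean P0))^2))^2"
    by (simp add: f_def a_def)
qed

lemma exists_random_sign_extension:
  fixes P0 :: "(real^'d) measure"
  assumes P0: "P0 \<in> Q2"
  obtains M :: "((real^'d) \<times> bool) measure" and s :: "(real^'d) \<times> bool \<Rightarrow> real"
  where "prob_space M" "square_integrable M fst" "distr M borel fst = P0"
    "s \<in> borel_measurable M" "\<And>z. \<bar>s z\<bar> = 1" "(\<integral>z. s z \<partial>M) = 0"
proof -
  define C where "C = measure_pmf (bernoulli_pmf (1/2))"
  define M where "M = P0 \<Otimes>\<^sub>M C"
  define s where "s z = (if snd z then 1 else - 1 :: real)" for z :: "(real^'d) \<times> bool"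
  interpret p0: prob_space P0 using Q2D[OF P0] by simp
  interpret c: prob_space C unfolding C_def by (rule prob_space_measure_pmf)
  interpret pp: pair_prob_space P0 C by unfold_locales
  have sP0: "sets P0 = sets borel" using Q2D[OF P0] by simp
  have fst_meas: "fst \<in> measurable M P0" and snd_meas: "snd \<in> measurable M C"
    unfolding M_def by simp_all
  have "distr M borel fst = distr M P0 fst" using sP0 by (intro distr_cong) auto
  also have "\<dots> = P0" unfolding M_def by (rule c.distr_pair_fst)
  finally have fst_distr: "distr M borel fst = P0" .
  have fst_borel: "fst \<in> borel_measurable M"
    using fst_meas by (simp add: measurable_cong_sets[OF refl sP0])
  have "integrable M (\<lambda>z. (norm (fst z))^2)"
    using Q2D(4)[OF P0] integrable_distr_eq[OF fst_borel, of "\<lambda>x. (norm x)^2"] fst_distr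
    by (simp add: square_integrable_def)
  then have "square_integrable M fst" using fst_borel by (simp add: square_integrable_def)
  moreover have "s \<in> borel_measurable M"
    unfolding s_def using measurable_comp[OF snd_meas, of "\<lambda>b. if b then 1 else - 1 :: real"]
    by (simp add: C_def comp_def)
  moreover have "(\<integral>z. s z \<partial>M) = 0"
  proof -
    have "distr M C snd = C"
      unfolding M_def by (rule distr_pair_snd[OF p0.prob_space_axioms c.sigma_finite_measure_axioms])
    then have "(\<integral>z. s z \<partial>M) = (\<integral>b. (if b then 1 else - 1 :: real) \<partial>C)"
      using integral_distr[OF snd_meas, of "\<lambda>b. if b then 1 else - 1 :: real"] by (simp add: C_def s_def)
    then show ?thesis by (simp add: C_def)
  qed
  ultimately show ?thesis
    using that[of M s] pp.prob_space_axioms fst_distr by (simp add: M_def s_def)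
qed

lemma omega_lower_bound:
  fixes P0 :: "(real^'d) measure" and X :: "real^'r^'d" and a :: "real^'d" and \<delta> :: real
  assumes XX: "transpose X ** X = mat 1" and card: "CARD('r) < CARD('d)" and P0: "P0 \<in> Q2"
  defines "c \<equiv> \<integral>x. (norm (proj_perp X *v (x - mean P0)))^2 \<partial>P0"
  obtains P where "P \<in> Q2" "W2 P P0 \<le> sqrt ((norm a)^2 + \<delta>^2)" "mean P = mean P0 + a"
    "(\<integral>\<xi>. omega X \<xi> \<partial>P) = (norm (proj_perp X *v (mean P0 + a)))^2 + (sqrt c + \<delta>)^2"
proof -
  obtain M :: "((real^'d) \<times> bool) measure" and s :: "(real^'d) \<times> bool \<Rightarrow> real" where M: "prob_space M"
    and x: "square_integrable M fst" and x_distr: "distr M borel fst = P0"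
    and s: "s \<in> borel_measurable M" "\<And>z. \<bar>s z\<bar> = 1" "(\<integral>z. s z \<partial>M) = 0"
    using exists_random_sign_extension[OF P0] by blast
  interpret prob_space M by (rule M)
  obtain v where v: "norm v = 1" "proj_perp X *v v = v"
    using proj_perp_fixes_unit_vector[OF XX card] by blast
  obtain w where w: "aligned_direction M (proj_perp X) fst w"
    using exists_aligned_direction[OF x proj_perp_idem[OF XX] v s] by blast
  define \<xi> where "\<xi> z = fst z + a + \<delta> *\<^sub>R w z" for z
  have \<xi>: "square_integrable M \<xi>"
    unfolding \<xi>_def using w square_integrable_add[OF square_integrable_add[OF x square_integrable_const]
        square_integrable_scaleR] by (simp add: aligned_direction_def)
  have mean_P0: "mean P0 = (\<integral>z. fst z \<partial>M)"
    using mean_distr[OF square_integrableD(1)[OF x]] x_distr by simp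
  have c_M: "c = (\<integral>z. (norm (proj_perp X *v (fst z - mean P0)))^2 \<partial>M)"
    unfolding c_def using integral_distr[OF square_integrableD(1)[OF x], of "\<lambda>y. (norm (proj_perp X *v (y - mean P0)))^2"]
      x_distr by simp
  show ?thesis
  proof (rule that[of "distr M borel \<xi>"])
    show "distr M borel \<xi> \<in> Q2" by (rule distr_in_Q2[OF \<xi>])
    show "W2 (distr M borel \<xi>) P0 \<le> sqrt ((norm a)^2 + \<delta>^2)"
      using W2_distr_le[OF square_integrableD(1)[OF \<xi>] square_integrableD(1)[OF x] x_distr]
        integral_aligned_perturbation(2)[OF x w]
      by (simp add: \<xi>_def)
    show "mean (distr M borel \<xi>) = mean P0 + a"
      using mean_distr[OF square_integrableD(1)[OF \<xi>]] integral_aligned_perturbation(1)[OF x w] mean_P0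
      by (simp add: \<xi>_def)
    have "(\<integral>y. omega X y \<partial>distr M borel \<xi>) = (\<integral>z. (norm (proj_perp X *v \<xi> z))^2 \<partial>M)"
      using integral_distr[OF square_integrableD(1)[OF \<xi>], of "\<lambda>y. (norm (proj_perp X *v y))^2"]
      by (simp add: omega_eq_norm_proj_perp[OF XX])
    then show "(\<integral>y. omega X y \<partial>distr M borel \<xi>) = (norm (proj_perp X *v (mean P0 + a)))^2 + (sqrt c + \<delta>)^2"
      using integral_norm_sq_aligned_perturbation[OF x w] mean_P0 c_M by (simp add: \<xi>_def)
  qed
qed

lemma psi_eq:
  fixes P0 :: "(real^'d) measure" and X :: "real^'r^'d"
  assumes XX: "transpose X ** X = mat 1" and card: "CARD('r) < CARD('d)"
    and \<rho>: "\<rho> > 0" and P0: "P0 \<in> Q2" and \<mu>: "\<mu> \<in> M2 P0 \<rho>"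
  defines "c \<equiv> \<integral>x. (norm (proj_perp X *v (x - mean P0)))^2 \<partial>P0"
  shows "psi P0 \<rho> \<mu> X = ereal ((sqrt c + sqrt (\<rho>^2 - (norm (\<mu> - mean P0))^2))^2 + (norm (proj_perp X *v \<mu>))^2)"
    (is "_ = ereal ?T")
proof -
  define \<delta> where "\<delta> = sqrt (\<rho>^2 - (norm (\<mu> - mean P0))^2)"
  define feasible where "feasible = {P. P \<in> Q2 \<and> W2 P P0 \<le> \<rho> \<and> mean P = \<mu>}"
  have upper: "(\<integral>\<xi>. omega X \<xi> \<partial>P) \<le> ?T" if "P \<in> feasible" for P
    using that omega_upper_bound(2)[OF XX _ P0, of P \<rho>] \<rho> by (simp add: feasible_def c_def add.commute)
  obtain P1 where "P1 \<in> feasible" using \<mu> by (auto simp: M2_def feasible_def)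
  then have "(norm (\<mu> - mean P0))^2 \<le> \<rho>^2"
    using omega_upper_bound(1)[OF XX _ P0, of P1 \<rho>] \<rho> by (simp add: feasible_def)
  then have "sqrt ((norm (\<mu> - mean P0))^2 + \<delta>^2) = \<rho>"
    using \<rho> by (simp add: \<delta>_def)
  then obtain P where "P \<in> feasible" "(\<integral>\<xi>. omega X \<xi> \<partial>P) = ?T"
    using omega_lower_bound[OF XX card P0, of "\<mu> - mean P0" \<delta>]
    by (simp add: feasible_def c_def \<delta>_def add.commute) blast
  then show ?thesis
    unfolding psi_def feasible_def[symmetric] using upper
    by (intro SUP_eqI) (simp, metis)
qed

theorem mainTheorem4:
  fixes P0 :: "(real^'d) measure" and \<rho> :: real and \<mu> :: "real^'d" and X :: "real^'r^'d"
  assumes "1 \<le> CARD('r)" and "CARD('r) < CARD('d)"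
    and "\<rho> > 0" and "P0 \<in> Q2"
    and "\<mu> \<in> M2 P0 \<rho>" and "X \<in> stiefel"
  shows "psi P0 \<rho> \<mu> X =
    ereal ((sqrt (trace ((mat 1 - X ** transpose X) ** covariance P0))
            + sqrt (\<rho>^2 - (norm (\<mu> - mean P0))^2))^2
           + trace ((mat 1 - X ** transpose X) ** outer \<mu> \<mu>))"
proof -
  have XX: "transpose X ** X = mat 1" using assms(6) by (simp add: stiefel_def)
  have "trace ((mat 1 - X ** transpose X) ** covariance P0)
      = (\<integral>x. (norm (proj_perp X *v (x - mean P0)))^2 \<partial>P0)"
    unfolding proj_perp_def[symmetric] by (rule trace_proj_perp_covariance[OF XX assms(4)])
  moreover have "trace ((mat 1 - X ** transpose X) ** outer \<mu> \<mu>) = (norm (proj_perp X *v \<mu>))^2"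
    using omega_eq_norm_proj_perp[OF XX, of \<mu>] by (simp add: omega_def)
  ultimately show ?thesis using psi_eq[OF XX assms(2-5)] by simp
qed

end
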